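(* Let $G$ and $H$ be connected graphs, each with at least two vertices. Then $$\rho_o(G\square H)\geq \max\{\rho(G)\rho_o(H),\ \rho(H)\rho_o(G),\ \eta_H\rho_o(G)+\eta_G^H,\ \eta_G\rho_o(H)+\eta_H^G\},$$ where $\eta_G=\lceil(\mathrm{diam}(G)+1)/3\rceil$ and $\eta_G^H=1$ if $G\neq K_2$ and $\mathrm{diam}(H)\equiv 2 \pmod 3$, and $\eta_G^H=0$ otherwise (and symmetrically for $\eta_H$, $\eta_H^G$).
   Context: All graphs are finite and simple. A set $P\subseteq V(G)$ is a packing of $G$ if $N[u]\cap N[v]=\emptyset$ for all distinct $u,v\in P$ ($N[u]$ the closed neighborhood); $\rho(G)$ is the maximum size of a packing. A set $P$ is an open packing if the open neighborhoods $N(u)$, $u\in P$, are pairwise disjoint; $\rho_o(G)$ is the maximum size of an open packing. $\mathrm{diam}(G)$ is the diameter. The Cartesian product $G\square H$ has vertex set $V(G)\times V(H)$, with $(g,h)$ adjacent to $(g',h')$ iff ($gg'\in E(G)$ and $h=h'$) or ($g=g'$ and $hh'\in E(H)$). *)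

theory Defs
  imports Complex_Main
begin

definition simple_graph :: "'a set \<Rightarrow> ('a \<Rightarrow> 'a \<Rightarrow> bool) \<Rightarrow> bool" where
  "simple_graph V E \<longleftrightarrow> finite V \<and> (\<forall>u v. E u v \<longrightarrow> u \<in> V \<and> v \<in> V)
     \<and> (\<forall>u v. E u v \<longrightarrow> E v u) \<and> (\<forall>u. \<not> E u u)"

definition nbhd :: "'a set \<Rightarrow> ('a \<Rightarrow> 'a \<Rightarrow> bool) \<Rightarrow> 'a \<Rightarrow> 'a set" where
  "nbhd V E v = {u \<in> V. E v u}"

definition cnbhd :: "'a set \<Rightarrow> ('a \<Rightarrow> 'a \<Rightarrow> bool) \<Rightarrow> 'a \<Rightarrow> 'a set" where
  "cnbhd V E v = insert v (nbhd V E v)"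

definition packing :: "'a set \<Rightarrow> ('a \<Rightarrow> 'a \<Rightarrow> bool) \<Rightarrow> 'a set \<Rightarrow> bool" where
  "packing V E P \<longleftrightarrow> P \<subseteq> V \<and>
     (\<forall>u\<in>P. \<forall>v\<in>P. u \<noteq> v \<longrightarrow> cnbhd V E u \<inter> cnbhd V E v = {})"

definition open_packing :: "'a set \<Rightarrow> ('a \<Rightarrow> 'a \<Rightarrow> bool) \<Rightarrow> 'a set \<Rightarrow> bool" where
  "open_packing V E P \<longleftrightarrow> P \<subseteq> V \<and>
     (\<forall>u\<in>P. \<forall>v\<in>P. u \<noteq> v \<longrightarrow> nbhd V E u \<inter> nbhd V E v = {})"

definition packing_number :: "'a set \<Rightarrow> ('a \<Rightarrow> 'a \<Rightarrow> bool) \<Rightarrow> nat" where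
  "packing_number V E = Max (card ` {P. packing V E P})"

definition open_packing_number :: "'a set \<Rightarrow> ('a \<Rightarrow> 'a \<Rightarrow> bool) \<Rightarrow> nat" where
  "open_packing_number V E = Max (card ` {P. open_packing V E P})"

fun walk_len :: "('a \<Rightarrow> 'a \<Rightarrow> bool) \<Rightarrow> 'a \<Rightarrow> 'a \<Rightarrow> nat \<Rightarrow> bool" where
  "walk_len E u v 0 = (u = v)"
| "walk_len E u v (Suc n) = (\<exists>w. E u w \<and> walk_len E w v n)"

definition gdist :: "('a \<Rightarrow> 'a \<Rightarrow> bool) \<Rightarrow> 'a \<Rightarrow> 'a \<Rightarrow> nat" where
  "gdist E u v = (LEAST n. walk_len E u v n)"

definition connected_graph :: "'a set \<Rightarrow> ('a \<Rightarrow> 'a \<Rightarrow> bool) \<Rightarrow> bool" where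
  "connected_graph V E \<longleftrightarrow> simple_graph V E \<and> V \<noteq> {} \<and>
     (\<forall>u\<in>V. \<forall>v\<in>V. \<exists>n. walk_len E u v n)"

definition diam :: "'a set \<Rightarrow> ('a \<Rightarrow> 'a \<Rightarrow> bool) \<Rightarrow> nat" where
  "diam V E = Max {gdist E u v | u v. u \<in> V \<and> v \<in> V}"

definition is_K2 :: "'a set \<Rightarrow> ('a \<Rightarrow> 'a \<Rightarrow> bool) \<Rightarrow> bool" where
  "is_K2 V E \<longleftrightarrow> card V = 2 \<and> (\<forall>u\<in>V. \<forall>v\<in>V. u \<noteq> v \<longrightarrow> E u v)"

definition cart_edge :: "('a \<Rightarrow> 'a \<Rightarrow> bool) \<Rightarrow> ('b \<Rightarrow> 'b \<Rightarrow> bool)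
    \<Rightarrow> ('a \<times> 'b) \<Rightarrow> ('a \<times> 'b) \<Rightarrow> bool" where
  "cart_edge EG EH x y \<longleftrightarrow>
     (EG (fst x) (fst y) \<and> snd x = snd y) \<or> (fst x = fst y \<and> EH (snd x) (snd y))"

definition eta :: "'a set \<Rightarrow> ('a \<Rightarrow> 'a \<Rightarrow> bool) \<Rightarrow> nat" where
  "eta V E = nat \<lceil>(real (diam V E) + 1) / 3\<rceil>"

definition eta_sup :: "'a set \<Rightarrow> ('a \<Rightarrow> 'a \<Rightarrow> bool) \<Rightarrow> 'b set \<Rightarrow> ('b \<Rightarrow> 'b \<Rightarrow> bool) \<Rightarrow> nat" where
  "eta_sup VG EG VH EH = (if \<not> is_K2 VG EG \<and> diam VH EH mod 3 = 2 then 1 else 0)"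

end

theory Submission
  imports Defs
begin

text \<open>A packing is an open packing and an independent set. In \<open>G \<box> H\<close> a common neighbour
of \<open>(a, b)\<close> and \<open>(a', b')\<close> either witnesses a common neighbour in one factor or an edge
\<open>a a'\<close> together with an edge \<open>b' b\<close>; hence \<open>A \<times> B\<close> is an open packing of \<open>G \<box> H\<close> when
\<open>A\<close>, \<open>B\<close> are open packings and one of them is independent. This gives
\<open>\<rho>(G) \<rho>\<^sub>o(H) \<le> \<rho>\<^sub>o(G \<box> H)\<close>. Along a diametral path of \<open>H\<close>, from \<open>u\<close> to \<open>v\<close>, the vertices
at distances \<open>0, 3, 6, \<dots>\<close> from \<open>u\<close> form a packing with \<open>\<eta>\<^sub>H\<close> elements, so
\<open>\<eta>\<^sub>H \<rho>\<^sub>o(G) \<le> \<rho>\<^sub>o(G \<box> H)\<close>. If \<open>diam(H) \<equiv> 2 (mod 3)\<close>, the end vertex \<open>v\<close> lies outside the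
closed neighbourhoods of this packing; if moreover \<open>G \<noteq> K\<^sub>2\<close>, a maximum open packing \<open>X\<close>
of \<open>G\<close> misses some vertex \<open>g\<close> (an open packing of all of a connected graph with at
least two vertices forces \<open>K\<^sub>2\<close>), and \<open>(g, v)\<close> can be added to the product packing.\<close>

lemma packing_imp_open_packing: "packing V E P \<Longrightarrow> open_packing V E P"
  unfolding packing_def open_packing_def cnbhd_def by blast

lemma packing_no_edge:
  assumes "simple_graph V E" "packing V E P" "p \<in> P" "q \<in> P"
  shows "\<not> E p q"
proof
  assume pq: "E p q"
  with assms(1) have "p \<noteq> q" "q \<in> V" by (auto simp: simple_graph_def)
  moreover have "q \<in> cnbhd V E p \<inter> cnbhd V E q"
    using pq \<open>q \<in> V\<close> by (simp add: cnbhd_def nbhd_def)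
  ultimately show False using assms(2-4) unfolding packing_def by blast
qed

lemma open_packing_insert:
  "open_packing V E (insert x P) \<longleftrightarrow> open_packing V E P \<and> x \<in> V \<and>
     (\<forall>y\<in>P. y \<noteq> x \<longrightarrow> nbhd V E x \<inter> nbhd V E y = {})"
  unfolding open_packing_def by (metis (no_types, lifting) Int_commute insert_iff insert_subset)

lemma finite_packings: "finite V \<Longrightarrow> finite {P. packing V E P}"
  unfolding packing_def by (rule finite_subset[of _ "Pow V"]) auto

lemma finite_open_packings: "finite V \<Longrightarrow> finite {P. open_packing V E P}"
  unfolding open_packing_def by (rule finite_subset[of _ "Pow V"]) auto

lemma packing_number_attained:
  assumes "finite V"
  obtains P where "packing V E P" "card P = packing_number V E"
proof -
  have "finite {P. packing V E P}" using assms by (rule finite_packings)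
  moreover have "packing V E {}" by (simp add: packing_def)
  ultimately have "packing_number V E \<in> card ` {P. packing V E P}"
    unfolding packing_number_def by (intro Max_in) auto
  then show thesis using that by auto
qed

lemma open_packing_number_attained:
  assumes "finite V"
  obtains P where "open_packing V E P" "card P = open_packing_number V E"
proof -
  have "finite {P. open_packing V E P}" using assms by (rule finite_open_packings)
  moreover have "open_packing V E {}" by (simp add: open_packing_def)
  ultimately have "open_packing_number V E \<in> card ` {P. open_packing V E P}"
    unfolding open_packing_number_def by (intro Max_in) auto
  then show thesis using that by auto
qed

lemma card_le_open_packing_number:
  assumes "finite V" "open_packing V E P"
  shows "card P \<le> open_packing_number V E"
proof -
  have "finite {P. open_packing V E P}" using assms(1) by (rule finite_open_packings)
  then show ?thesis
    unfolding open_packing_number_def using assms(2) by (intro Max_ge) auto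
qed

subsection \<open>Open packings of the Cartesian product\<close>

lemma open_packing_cart_product:
  assumes A: "open_packing VG EG A" and B: "open_packing VH EH B"
    and no_edges: "\<And>a a' b b'. \<lbrakk>a \<in> A; a' \<in> A; b \<in> B; b' \<in> B; EG a a'; EH b b'\<rbrakk> \<Longrightarrow> False"
  shows "open_packing (VG \<times> VH) (cart_edge EG EH) (A \<times> B)"
  unfolding open_packing_def
proof (intro conjI ballI impI)
  show "A \<times> B \<subseteq> VG \<times> VH" using A B by (auto simp: open_packing_def)
next
  fix x y assume x: "x \<in> A \<times> B" and y: "y \<in> A \<times> B" and "x \<noteq> y"
  obtain a b a' b' where xy: "x = (a, b)" "y = (a', b')" by (cases x, cases y)
  have ab: "a \<in> A" "b \<in> B" "a' \<in> A" "b' \<in> B" using x y xy by auto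
  have A_disj: "nbhd VG EG a \<inter> nbhd VG EG a' = {}" if "a \<noteq> a'"
    using A ab that unfolding open_packing_def by blast
  have B_disj: "nbhd VH EH b \<inter> nbhd VH EH b' = {}" if "b \<noteq> b'"
    using B ab that unfolding open_packing_def by blast
  show "nbhd (VG \<times> VH) (cart_edge EG EH) x \<inter> nbhd (VG \<times> VH) (cart_edge EG EH) y = {}"
  proof (rule ccontr)
    assume "nbhd (VG \<times> VH) (cart_edge EG EH) x \<inter> nbhd (VG \<times> VH) (cart_edge EG EH) y \<noteq> {}"
    then obtain c d where cd: "c \<in> VG" "d \<in> VH"
      "cart_edge EG EH (a, b) (c, d)" "cart_edge EG EH (a', b') (c, d)"
      by (auto simp: nbhd_def xy)
    then consider "EG a c" "EG a' c" "b = d" "b' = d" | "a = c" "a' = c" "EH b d" "EH b' d"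
      | "EG a a'" "EH b' b" | "EG a' a" "EH b b'"
      by (auto simp: cart_edge_def)
    then show False
      by cases (use \<open>x \<noteq> y\<close> xy cd ab A_disj B_disj no_edges in \<open>auto simp: nbhd_def\<close>)
  qed
qed

lemma open_packing_number_cart_ge_packing:
  assumes "simple_graph VG EG" "simple_graph VH EH"
  shows "packing_number VG EG * open_packing_number VH EH
           \<le> open_packing_number (VG \<times> VH) (cart_edge EG EH)"
proof -
  have fin: "finite VG" "finite VH" using assms by (auto simp: simple_graph_def)
  obtain P where P: "packing VG EG P" "card P = packing_number VG EG"
    using packing_number_attained[OF fin(1)] .
  obtain X where X: "open_packing VH EH X" "card X = open_packing_number VH EH"
    using open_packing_number_attained[OF fin(2)] .
  have "open_packing (VG \<times> VH) (cart_edge EG EH) (P \<times> X)"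
    using packing_imp_open_packing[OF P(1)] X(1)
    by (rule open_packing_cart_product) (use packing_no_edge[OF assms(1) P(1)] in blast)
  from card_le_open_packing_number[OF _ this] fin P X show ?thesis
    by (simp add: card_cartesian_product)
qed

lemma nbhd_cart_swap:
  "nbhd (VG \<times> VH) (cart_edge EG EH) (prod.swap p)
     = prod.swap ` nbhd (VH \<times> VG) (cart_edge EH EG) p"
  by (cases p) (force simp: nbhd_def cart_edge_def)

lemma open_packing_cart_swap:
  assumes "open_packing (VH \<times> VG) (cart_edge EH EG) Q"
  shows "open_packing (VG \<times> VH) (cart_edge EG EH) (prod.swap ` Q)"
  unfolding open_packing_def
proof (intro conjI ballI impI)
  show "prod.swap ` Q \<subseteq> VG \<times> VH" using assms by (auto simp: open_packing_def)
next
  fix x y assume "x \<in> prod.swap ` Q" "y \<in> prod.swap ` Q" "x \<noteq> y"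
  then obtain p q where "p \<in> Q" "q \<in> Q" "p \<noteq> q" "x = prod.swap p" "y = prod.swap q" by auto
  with assms show "nbhd (VG \<times> VH) (cart_edge EG EH) x \<inter> nbhd (VG \<times> VH) (cart_edge EG EH) y = {}"
    unfolding open_packing_def by (simp add: nbhd_cart_swap image_Int[symmetric])
qed

lemma open_packing_number_cart_swap_le:
  assumes "finite VG" "finite VH"
  shows "open_packing_number (VH \<times> VG) (cart_edge EH EG)
           \<le> open_packing_number (VG \<times> VH) (cart_edge EG EH)"
proof -
  obtain Q where Q: "open_packing (VH \<times> VG) (cart_edge EH EG) Q"
      "card Q = open_packing_number (VH \<times> VG) (cart_edge EH EG)"
    using open_packing_number_attained assms by (metis finite_SigmaI)
  have "card (prod.swap ` Q) = card Q" by (simp add: card_image)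
  with Q card_le_open_packing_number[OF _ open_packing_cart_swap[OF Q(1)]] assms
  show ?thesis by simp
qed

subsection \<open>Distances and diametral packings\<close>

lemma walk_len_append: "walk_len E u v m \<Longrightarrow> walk_len E v w n \<Longrightarrow> walk_len E u w (m + n)"
  by (induction m arbitrary: u) auto

lemma walk_len_split:
  "walk_len E u v n \<Longrightarrow> k \<le> n \<Longrightarrow> \<exists>w. walk_len E u w k \<and> walk_len E w v (n - k)"
proof (induction k arbitrary: u n)
  case 0 then show ?case by auto
next
  case (Suc k)
  then obtain n' z where "n = Suc n'" "E u z" "walk_len E z v n'" by (cases n) auto
  with Suc show ?case by fastforce
qed

lemma walk_len_closed:
  assumes "\<And>a b. a \<in> S \<Longrightarrow> E a b \<Longrightarrow> b \<in> S" "u \<in> S" "walk_len E u v n"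
  shows "v \<in> S"
  using assms(2,3)
proof (induction n arbitrary: u)
  case (Suc n)
  then obtain w where "E u w" "walk_len E w v n" by auto
  with Suc assms(1) show ?case by blast
qed simp

lemma gdist_walk:
  "connected_graph V E \<Longrightarrow> u \<in> V \<Longrightarrow> v \<in> V \<Longrightarrow> walk_len E u v (gdist E u v)"
  unfolding gdist_def connected_graph_def by (meson LeastI_ex)

lemma gdist_le: "walk_len E u v n \<Longrightarrow> gdist E u v \<le> n"
  unfolding gdist_def by (rule Least_le)

lemma gdist_triangle:
  "connected_graph V E \<Longrightarrow> u \<in> V \<Longrightarrow> a \<in> V \<Longrightarrow> walk_len E a b n
     \<Longrightarrow> gdist E u b \<le> gdist E u a + n"
  by (meson gdist_le gdist_walk walk_len_append)

lemma gdist_cnbhd: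
  assumes "connected_graph V E" "u \<in> V" "a \<in> V" "c \<in> cnbhd V E a"
  shows "gdist E u c \<le> gdist E u a + 1 \<and> gdist E u a \<le> gdist E u c + 1"
proof (cases "c = a")
  case False
  with assms have "E a c" "E c a" "c \<in> V"
    by (auto simp: connected_graph_def simple_graph_def cnbhd_def nbhd_def)
  then have "walk_len E a c 1" "walk_len E c a 1" by auto
  with gdist_triangle[OF assms(1-3)] gdist_triangle[OF assms(1,2) \<open>c \<in> V\<close>]
  show ?thesis by presburger
qed simp

lemma gdist_attains:
  assumes "connected_graph V E" "u \<in> V" "v \<in> V" "k \<le> gdist E u v"
  obtains w where "w \<in> V" "gdist E u w = k"
proof -
  obtain w where w: "walk_len E u w k" "walk_len E w v (gdist E u v - k)"
    using walk_len_split[OF gdist_walk[OF assms(1-3)] assms(4)] by blast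
  have "E a b \<Longrightarrow> b \<in> V" for a b
    using assms(1) unfolding connected_graph_def simple_graph_def by blast
  then have "w \<in> V" using walk_len_closed[of V E, OF _ assms(2) w(1)] by blast
  with gdist_triangle[OF assms(1,2) _ w(2)] gdist_le[OF w(1)] assms(4) that show thesis
    by force
qed

lemma diam_attained:
  assumes "connected_graph V E"
  obtains u v where "u \<in> V" "v \<in> V" "gdist E u v = diam V E"
proof -
  let ?D = "{gdist E u v | u v. u \<in> V \<and> v \<in> V}"
  have V: "finite V" "V \<noteq> {}" using assms by (auto simp: connected_graph_def simple_graph_def)
  have "?D = case_prod (gdist E) ` (V \<times> V)" by auto
  with V have "finite ?D" "?D \<noteq> {}" by simp_all
  then have "diam V E \<in> ?D" unfolding diam_def by (rule Max_in)
  then obtain u v where "u \<in> V" "v \<in> V" "diam V E = gdist E u v" by blast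
  with that show thesis by simp
qed

lemma packing_if_gdist_spread:
  assumes "connected_graph V E" "u \<in> V" "W \<subseteq> V"
    and spread: "\<And>a b. \<lbrakk>a \<in> W; b \<in> W; a \<noteq> b\<rbrakk>
                   \<Longrightarrow> gdist E u a + 3 \<le> gdist E u b \<or> gdist E u b + 3 \<le> gdist E u a"
  shows "packing V E W"
  unfolding packing_def
proof (intro conjI ballI impI)
  fix a b assume ab: "a \<in> W" "b \<in> W" "a \<noteq> b"
  show "cnbhd V E a \<inter> cnbhd V E b = {}"
  proof (rule ccontr)
    assume "cnbhd V E a \<inter> cnbhd V E b \<noteq> {}"
    then obtain c where "c \<in> cnbhd V E a" "c \<in> cnbhd V E b" by blast
    with gdist_cnbhd[OF assms(1,2)] ab assms(3)
    have "gdist E u c \<le> gdist E u a + 1 \<and> gdist E u a \<le> gdist E u c + 1"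
      "gdist E u c \<le> gdist E u b + 1 \<and> gdist E u b \<le> gdist E u c + 1" by auto
    with spread[OF ab] show False by linarith
  qed
qed (use assms(3) in auto)

lemma diametral_packing:
  assumes conn: "connected_graph V E"
  obtains W where "packing V E W" "card W = diam V E div 3 + 1"
    and "diam V E mod 3 = 2 \<Longrightarrow> \<exists>v\<in>V. \<forall>w\<in>W. v \<notin> cnbhd V E w"
proof -
  obtain u v where uv: "u \<in> V" "v \<in> V" "gdist E u v = diam V E"
    using diam_attained[OF conn] .
  define d where "d = diam V E"
  have "\<forall>k. \<exists>w. k \<le> d \<longrightarrow> w \<in> V \<and> gdist E u w = k"
    using gdist_attains[OF conn uv(1,2)] uv(3) d_def by metis
  then obtain layer where layer: "\<And>k. k \<le> d \<Longrightarrow> layer k \<in> V \<and> gdist E u (layer k) = k"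
    by metis
  define W where "W = (\<lambda>k. layer (3 * k)) ` {..d div 3}"
  have W_gdist: "gdist E u ` W = (\<lambda>k. 3 * k) ` {..d div 3}"
    unfolding W_def image_image using layer by (intro image_cong) auto
  have W_V: "W \<subseteq> V" unfolding W_def using layer by auto
  have inj: "inj_on (gdist E u) W"
  proof (rule inj_onI)
    fix a b assume "a \<in> W" "b \<in> W" "gdist E u a = gdist E u b"
    then show "a = b" unfolding W_def using layer by auto
  qed
  have "packing V E W"
  proof (rule packing_if_gdist_spread[OF conn uv(1) W_V])
    fix a b assume ab: "a \<in> W" "b \<in> W" "a \<noteq> b"
    then have "gdist E u a \<noteq> gdist E u b" using inj by (auto dest: inj_onD)
    moreover have "gdist E u a \<in> (\<lambda>k. 3 * k) ` {..d div 3}" "gdist E u b \<in> (\<lambda>k. 3 * k) ` {..d div 3}"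
      using ab W_gdist by blast+
    ultimately show "gdist E u a + 3 \<le> gdist E u b \<or> gdist E u b + 3 \<le> gdist E u a" by auto
  qed
  moreover have "card W = d div 3 + 1"
    using card_image[OF inj] W_gdist by (simp add: card_image inj_on_def)
  moreover have "\<forall>w\<in>W. v \<notin> cnbhd V E w" if "d mod 3 = 2"
  proof (intro ballI notI)
    fix w assume "w \<in> W" "v \<in> cnbhd V E w"
    then have "gdist E u v \<le> gdist E u w + 1" using gdist_cnbhd[OF conn uv(1)] W_V by blast
    moreover have "gdist E u w \<le> 3 * (d div 3)" using \<open>w \<in> W\<close> W_gdist by force
    moreover have "d = 3 * (d div 3) + 2" using that by presburger
    ultimately show False using uv(3) d_def by linarith
  qed
  ultimately show thesis using that uv(2) d_def by blast
qed

subsection \<open>The diametral bound\<close>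

lemma is_K2_if_open_packing_all:
  assumes conn: "connected_graph V E" and two: "card V \<ge> 2" and op: "open_packing V E V"
  shows "is_K2 V E"
proof -
  have simple: "simple_graph V E" and "V \<noteq> {}"
    and reach: "\<And>u v. u \<in> V \<Longrightarrow> v \<in> V \<Longrightarrow> \<exists>n. walk_len E u v n"
    using conn by (auto simp: connected_graph_def)
  have inV: "\<And>p q. E p q \<Longrightarrow> p \<in> V \<and> q \<in> V" and irr: "\<And>p. \<not> E p p"
    and sym: "\<And>p q. E p q \<Longrightarrow> E q p"
    using simple by (auto simp: simple_graph_def)
  have unique_nbr: "a = b" if "E x a" "E x b" for x a b
  proof (rule ccontr)
    assume "a \<noteq> b"
    moreover have "x \<in> nbhd V E a \<inter> nbhd V E b" using that inV sym by (simp add: nbhd_def)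
    moreover have "a \<in> V" "b \<in> V" using that inV by auto
    ultimately show False using op unfolding open_packing_def by blast
  qed
  obtain u where u: "u \<in> V" using \<open>V \<noteq> {}\<close> by blast
  have "\<not> V \<subseteq> {u}"
  proof
    assume "V \<subseteq> {u}"
    then have "card V \<le> card {u}" by (rule card_mono[rotated]) simp
    with two show False by simp
  qed
  then obtain v where v: "v \<in> V" "v \<noteq> u" by blast
  with reach[OF u] obtain n where "walk_len E u v n" by blast
  with v obtain w where uw: "E u w" by (cases n) auto
  have closed: "y \<in> {u, w}" if "x \<in> {u, w}" "E x y" for x y
  proof (cases "x = u")
    case True then show ?thesis using that unique_nbr[OF uw, of y] by simp
  next
    case False then show ?thesis using that unique_nbr[OF sym[OF uw], of y] by simp
  qed
  have "V \<subseteq> {u, w}"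
  proof
    fix y assume "y \<in> V"
    with reach[OF u] obtain n where "walk_len E u y n" by blast
    with closed show "y \<in> {u, w}" by (intro walk_len_closed[of "{u, w}" E u y n]) simp_all
  qed
  with u inV[OF uw] have V: "V = {u, w}" by blast
  moreover have "u \<noteq> w" using uw irr by blast
  ultimately have "card V = 2" by simp
  moreover have "\<forall>a\<in>V. \<forall>b\<in>V. a \<noteq> b \<longrightarrow> E a b"
    unfolding V using uw sym[OF uw] by blast
  ultimately show ?thesis unfolding is_K2_def by (rule conjI)
qed

lemma eta_eq_diam_div_3: "eta V E = diam V E div 3 + 1"
proof -
  define d where "d = diam V E"
  have "d = 3 * (d div 3) + d mod 3" by simp
  then have "real d = 3 * real (d div 3) + real (d mod 3)"
    by (metis of_nat_add of_nat_mult of_nat_numeral)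
  moreover have "real (d mod 3) \<le> 2" by simp
  ultimately have "\<lceil>(real d + 1) / 3\<rceil> = int (d div 3 + 1)"
    by (intro ceiling_unique) auto
  then show ?thesis unfolding eta_def d_def by simp
qed

lemma open_packing_cart_insert:
  assumes "simple_graph VH EH" and XW: "open_packing (VG \<times> VH) (cart_edge EG EH) (X \<times> W)"
    and "g \<in> VG" "g \<notin> X" "v \<in> VH" and far: "\<forall>w\<in>W. v \<notin> cnbhd VH EH w"
  shows "open_packing (VG \<times> VH) (cart_edge EG EH) (insert (g, v) (X \<times> W))"
  unfolding open_packing_insert
proof (intro conjI ballI impI)
  fix y assume "y \<in> X \<times> W"
  then obtain a w where y: "y = (a, w)" "a \<in> X" "w \<in> W" by blast
  with far \<open>v \<in> VH\<close> have "v \<noteq> w" "\<not> EH w v" by (auto simp: cnbhd_def nbhd_def)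
  moreover have "\<not> EH v w" using \<open>\<not> EH w v\<close> assms(1) by (auto simp: simple_graph_def)
  ultimately show "nbhd (VG \<times> VH) (cart_edge EG EH) (g, v) \<inter> nbhd (VG \<times> VH) (cart_edge EG EH) y = {}"
    using y \<open>g \<notin> X\<close> by (auto simp: nbhd_def cart_edge_def)
qed (use assms in auto)

lemma open_packing_number_cart_ge_eta:
  assumes cG: "connected_graph VG EG" and two: "card VG \<ge> 2" and cH: "connected_graph VH EH"
  shows "eta VH EH * open_packing_number VG EG + eta_sup VG EG VH EH
           \<le> open_packing_number (VG \<times> VH) (cart_edge EG EH)"
proof -
  have sH: "simple_graph VH EH" using cH by (simp add: connected_graph_def)
  have fin: "finite VG" "finite VH" using cG cH by (auto simp: connected_graph_def simple_graph_def)
  obtain X where X: "open_packing VG EG X" "card X = open_packing_number VG EG"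
    using open_packing_number_attained[OF fin(1)] .
  obtain W where W: "packing VH EH W" "card W = eta VH EH"
    and far: "diam VH EH mod 3 = 2 \<Longrightarrow> \<exists>v\<in>VH. \<forall>w\<in>W. v \<notin> cnbhd VH EH w"
    using diametral_packing[OF cH] unfolding eta_eq_diam_div_3 by blast
  have XW: "open_packing (VG \<times> VH) (cart_edge EG EH) (X \<times> W)"
    using X(1) packing_imp_open_packing[OF W(1)]
    by (rule open_packing_cart_product) (use packing_no_edge[OF sH W(1)] in blast)
  have card_XW: "card (X \<times> W) = eta VH EH * open_packing_number VG EG"
    using X(2) W(2) by (simp add: card_cartesian_product)
  show ?thesis
  proof (cases "eta_sup VG EG VH EH = 0")
    case True
    with card_le_open_packing_number[OF _ XW] fin card_XW show ?thesis by simp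
  next
    case False
    then have "\<not> is_K2 VG EG" "diam VH EH mod 3 = 2" "eta_sup VG EG VH EH = 1"
      unfolding eta_sup_def by (auto split: if_splits)
    then have "X \<noteq> VG" using is_K2_if_open_packing_all[OF cG two] X(1) by blast
    with X(1) obtain g where g: "g \<in> VG" "g \<notin> X" by (auto simp: open_packing_def)
    obtain v where v: "v \<in> VH" "\<forall>w\<in>W. v \<notin> cnbhd VH EH w"
      using far \<open>diam VH EH mod 3 = 2\<close> by blast
    have "finite (X \<times> W)" using XW fin by (auto intro: finite_subset simp: open_packing_def)
    with g have "card (insert (g, v) (X \<times> W)) = card (X \<times> W) + 1" by simp
    with card_le_open_packing_number[OF _ open_packing_cart_insert[OF sH XW g v]] fin card_XW
      \<open>eta_sup VG EG VH EH = 1\<close>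
    show ?thesis by simp
  qed
qed

theorem theorem4:
  fixes VG :: "'a set" and EG :: "'a \<Rightarrow> 'a \<Rightarrow> bool"
    and VH :: "'b set" and EH :: "'b \<Rightarrow> 'b \<Rightarrow> bool"
  assumes "connected_graph VG EG" and "card VG \<ge> 2"
    and "connected_graph VH EH" and "card VH \<ge> 2"
  shows "open_packing_number (VG \<times> VH) (cart_edge EG EH) \<ge>
    max (max (packing_number VG EG * open_packing_number VH EH)
             (packing_number VH EH * open_packing_number VG EG))
        (max (eta VH EH * open_packing_number VG EG + eta_sup VG EG VH EH)
             (eta VG EG * open_packing_number VH EH + eta_sup VH EH VG EG))"
proof -
  have simple: "simple_graph VG EG" "simple_graph VH EH"
    using assms(1,3) by (simp_all add: connected_graph_def)
  then have "finite VG" "finite VH" by (simp_all add: simple_graph_def)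
  then have swap: "open_packing_number (VH \<times> VG) (cart_edge EH EG)
                     \<le> open_packing_number (VG \<times> VH) (cart_edge EG EH)"
    by (rule open_packing_number_cart_swap_le)
  show ?thesis
    using open_packing_number_cart_ge_packing[OF simple]
      open_packing_number_cart_ge_packing[OF simple(2,1)]
      open_packing_number_cart_ge_eta[OF assms(1-3)]
      open_packing_number_cart_ge_eta[OF assms(3,4,1)] swap
    by (intro max.boundedI) linarith+
qed

end
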